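(* Let $\mathbf{X}$ be a finitely supported real random variable with $\mathbf{E}[\mathbf{X}]=0$ and $\mathrm{Var}[\mathbf{X}]=1$, and let $\lambda$ be the minimum probability that $\mathbf{X}$ puts on any point of its support. Suppose $f:\mathbb{R}^n\to\mathbb{R}$ is a multilinear polynomial of degree at most $d\ge1$ with $\|f\|_2=1$, and let $t_0:=(2e/\lambda)^d$. Then \[ \mathbf{E}_{\mathbf{x}\sim\mathbf{X}^{\otimes n}}\big[f(\mathbf{x})^2\cdot\mathbf{1}_{\{|f(\mathbf{x})|>t_0\}}\big]\le 0.52 . \]
   Context: $\|f\|_2=\mathbf{E}_{\mathbf{x}\sim\mathbf{X}^{\otimes n}}[f(\mathbf{x})^2]^{1/2}$, where $\mathbf{X}^{\otimes n}$ is a vector of $n$ i.i.d. copies of $\mathbf{X}$. *)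

theory Defs
  imports "HOL-Probability.Probability"
begin

definition multilinear_poly :: "nat \<Rightarrow> nat \<Rightarrow> (nat set \<Rightarrow> real) \<Rightarrow> (nat \<Rightarrow> real) \<Rightarrow> real" where
  "multilinear_poly n d c x = (\<Sum>S\<in>{S. S \<subseteq> {..<n} \<and> card S \<le> d}. c S * (\<Prod>i\<in>S. x i))"

definition is_multilinear_deg_le :: "nat \<Rightarrow> nat \<Rightarrow> ((nat \<Rightarrow> real) \<Rightarrow> real) \<Rightarrow> bool" where
  "is_multilinear_deg_le n d f \<longleftrightarrow> (\<exists>c. \<forall>x. f x = multilinear_poly n d c x)"

text \<open>Product distribution X^{\<otimes> n} on vectors indexed by {..<n} (coordinates \<ge> n fixed to 0).\<close>
definition prod_dist :: "real pmf \<Rightarrow> nat \<Rightarrow> (nat \<Rightarrow> real) pmf" where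
  "prod_dist X n = Pi_pmf {..<n} 0 (\<lambda>_. X)"

definition L2_norm :: "real pmf \<Rightarrow> nat \<Rightarrow> ((nat \<Rightarrow> real) \<Rightarrow> real) \<Rightarrow> real" where
  "L2_norm X n f = sqrt (measure_pmf.expectation (prod_dist X n) (\<lambda>x. (f x)^2))"

definition min_atom :: "real pmf \<Rightarrow> real" where
  "min_atom X = Min ((pmf X) ` set_pmf X)"

end

theory Submission
  imports Defs
begin

text \<open>
  A Bonami-type hypercontractive estimate \<open>E[f\<^sup>4] \<le> C\<^sup>d (E[f\<^sup>2])\<^sup>2\<close> with
  \<open>C = max (49/4) (5/\<lambda>)\<close> holds for every multilinear \<open>f\<close> of degree \<open>\<le> d\<close>. It is proved by
  induction on the number of variables: split off the last one, \<open>f = g + x\<^sub>n h\<close> with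
  \<open>deg g \<le> d\<close> and \<open>deg h \<le> d - 1\<close>; the moment conditions on \<open>X\<close> give
  \<open>E\<^sub>x\<^sub>n[f\<^sup>4] \<le> g\<^sup>4 + 7 g\<^sup>2 h\<^sup>2 + 5 E[X\<^sup>4] h\<^sup>4\<close>, and Cauchy-Schwarz on the cross term closes
  the induction. Since every atom carries at most the whole second moment, \<open>E[X\<^sup>4] \<le> 1/\<lambda>\<close>.
  Finally \<open>f\<^sup>2 \<one>{|f| > t} \<le> f\<^sup>4 / t\<^sup>2\<close>, so the truncated second moment is at most
  \<open>C\<^sup>d / t\<^sup>2 = (C \<lambda>\<^sup>2 / (4 e\<^sup>2))\<^sup>d \<le> 49 / (16 e\<^sup>2) < 0.52\<close>.
\<close>

lemma integral_finite_pmf: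
  fixes f :: "'a \<Rightarrow> real"
  assumes "finite (set_pmf M)"
  shows "(\<integral>x. f x \<partial>M) = (\<Sum>a\<in>set_pmf M. f a * pmf M a)"
  using assms by (intro integral_measure_pmf_real) auto

lemma integral_finite_pmf_mono:
  fixes f g :: "'a \<Rightarrow> real"
  assumes "finite (set_pmf M)" "\<And>x. x \<in> set_pmf M \<Longrightarrow> f x \<le> g x"
  shows "(\<integral>x. f x \<partial>M) \<le> (\<integral>x. g x \<partial>M)"
  using assms by (intro integral_mono_AE AE_pmfI integrable_measure_pmf_finite)

lemma integral_finite_pmf_Cauchy_Schwarz:
  fixes u v :: "'a \<Rightarrow> real"
  assumes "finite (set_pmf M)"
  shows "(\<integral>x. u x * v x \<partial>M)\<^sup>2 \<le> (\<integral>x. (u x)\<^sup>2 \<partial>M) * (\<integral>x. (v x)\<^sup>2 \<partial>M)"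
proof -
  let ?w = "\<lambda>x. sqrt (pmf M x)"
  have "(\<Sum>x\<in>set_pmf M. (u x * ?w x) * (v x * ?w x))\<^sup>2
      \<le> (\<Sum>x\<in>set_pmf M. (u x * ?w x)\<^sup>2) * (\<Sum>x\<in>set_pmf M. (v x * ?w x)\<^sup>2)"
    by (rule Cauchy_Schwarz_ineq_sum)
  also have "(\<lambda>x. (u x * ?w x) * (v x * ?w x)) = (\<lambda>x. u x * v x * pmf M x)"
    by (simp add: fun_eq_iff algebra_simps)
  finally show ?thesis
    using assms by (simp add: integral_finite_pmf power_mult_distrib)
qed

lemma finite_set_prod_dist:
  assumes "finite (set_pmf X)"
  shows "finite (set_pmf (prod_dist X n))"
  using assms by (auto simp: prod_dist_def set_Pi_pmf)

lemma prod_dist_Suc: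
  "prod_dist X (Suc n) = map_pmf (\<lambda>(y, x). x(n := y)) (pair_pmf X (prod_dist X n))"
  unfolding prod_dist_def lessThan_Suc by (rule Pi_pmf_insert) auto

lemma integral_pair_finite_pmf:
  fixes G :: "'a \<times> 'b \<Rightarrow> real"
  assumes "finite (set_pmf A)" "finite (set_pmf B)"
  shows "(\<integral>z. G z \<partial>pair_pmf A B) = (\<integral>b. (\<integral>a. G (a, b) \<partial>A) \<partial>B)"
proof -
  have "(\<integral>z. G z \<partial>pair_pmf A B) = (\<Sum>z\<in>set_pmf A \<times> set_pmf B. G z * pmf (pair_pmf A B) z)"
    using assms by (simp add: integral_finite_pmf)
  also have "\<dots> = (\<Sum>a\<in>set_pmf A. \<Sum>b\<in>set_pmf B. G (a, b) * (pmf A a * pmf B b))"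
    by (subst sum.cartesian_product) (auto intro!: sum.cong simp: pmf_pair)
  also have "\<dots> = (\<Sum>b\<in>set_pmf B. (\<Sum>a\<in>set_pmf A. G (a, b) * pmf A a) * pmf B b)"
    by (subst sum.swap) (simp add: sum_distrib_right mult.assoc)
  also have "\<dots> = (\<integral>b. (\<integral>a. G (a, b) \<partial>A) \<partial>B)"
    using assms by (simp add: integral_finite_pmf)
  finally show ?thesis .
qed

lemma integral_prod_dist_Suc:
  fixes F :: "(nat \<Rightarrow> real) \<Rightarrow> real"
  assumes "finite (set_pmf X)"
  shows "(\<integral>x. F x \<partial>prod_dist X (Suc n)) = (\<integral>x. (\<integral>y. F (x(n := y)) \<partial>X) \<partial>prod_dist X n)"
  unfolding prod_dist_Suc integral_map_pmf
  using assms finite_set_prod_dist[OF assms] by (simp add: integral_pair_finite_pmf)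

lemma subsets_card_le_insert:
  assumes "finite A" "a \<notin> A"
  shows "{S. S \<subseteq> insert a A \<and> card S \<le> Suc d}
       = {S. S \<subseteq> A \<and> card S \<le> Suc d} \<union> insert a ` {T. T \<subseteq> A \<and> card T \<le> d}"
proof (intro equalityI subsetI)
  fix S assume S: "S \<in> {S. S \<subseteq> insert a A \<and> card S \<le> Suc d}"
  then have "finite S" using assms(1) finite_subset by auto
  with S show "S \<in> {S. S \<subseteq> A \<and> card S \<le> Suc d} \<union> insert a ` {T. T \<subseteq> A \<and> card T \<le> d}"
    by (cases "a \<in> S") (auto simp: image_iff intro!: exI[of _ "S - {a}"])
next
  fix S assume "S \<in> {S. S \<subseteq> A \<and> card S \<le> Suc d} \<union> insert a ` {T. T \<subseteq> A \<and> card T \<le> d}"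
  then show "S \<in> {S. S \<subseteq> insert a A \<and> card S \<le> Suc d}"
    using assms by (auto simp: card_insert_if finite_subset)
qed

lemma multilinear_poly_fun_upd_beyond:
  assumes "n \<le> m"
  shows "multilinear_poly n d c (x(m := y)) = multilinear_poly n d c x"
proof -
  have "(\<Prod>i\<in>S. (x(m := y)) i) = (\<Prod>i\<in>S. x i)" if "S \<subseteq> {..<n}" for S
    using that assms by (intro prod.cong) auto
  then show ?thesis
    unfolding multilinear_poly_def by (intro sum.cong) auto
qed

lemma multilinear_poly_constant:
  assumes "n = 0 \<or> d = 0"
  shows "multilinear_poly n d c x = c {}"
proof -
  have "{S. S \<subseteq> {..<n} \<and> card S \<le> d} = {{}}"
    using assms by (auto simp: finite_subset)
  then show ?thesis
    unfolding multilinear_poly_def by simp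
qed

lemma multilinear_poly_Suc:
  "multilinear_poly (Suc n) (Suc d) c x =
     multilinear_poly n (Suc d) c x + x n * multilinear_poly n d (\<lambda>T. c (insert n T)) x"
proof -
  let ?mono = "\<lambda>S. c S * (\<Prod>i\<in>S. x i)"
  let ?Sets = "\<lambda>d. {S. S \<subseteq> {..<n} \<and> card S \<le> d}"
  have fin: "finite (?Sets d)" for d
    by (rule finite_subset[of _ "Pow {..<n}"]) auto
  have "multilinear_poly (Suc n) (Suc d) c x = sum ?mono (?Sets (Suc d) \<union> insert n ` ?Sets d)"
    unfolding multilinear_poly_def lessThan_Suc by (simp add: subsets_card_le_insert)
  also have "\<dots> = multilinear_poly n (Suc d) c x + sum ?mono (insert n ` ?Sets d)"
    unfolding multilinear_poly_def by (rule sum.union_disjoint) (auto simp: fin)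
  also have "sum ?mono (insert n ` ?Sets d) = (\<Sum>T\<in>?Sets d. ?mono (insert n T))"
    by (rule sum.reindex_cong[OF _ refl refl]) (auto simp: inj_on_def insert_ident)
  also have "\<dots> = x n * multilinear_poly n d (\<lambda>T. c (insert n T)) x"
  proof -
    have "(\<Prod>i\<in>insert n T. x i) = x n * (\<Prod>i\<in>T. x i)" if "T \<subseteq> {..<n}" for T
      using that finite_subset[OF that] by (subst prod.insert) auto
    then show ?thesis
      unfolding multilinear_poly_def sum_distrib_left by (intro sum.cong) auto
  qed
  finally show ?thesis .
qed

lemma integral_square_add_mult:
  fixes X :: "real pmf"
  assumes "finite (set_pmf X)" "(\<integral>y. y \<partial>X) = 0" "(\<integral>y. y\<^sup>2 \<partial>X) = 1"
  shows "(\<integral>y. (a + y * b)\<^sup>2 \<partial>X) = a\<^sup>2 + b\<^sup>2"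
proof -
  have "(\<lambda>y. (a + y * b)\<^sup>2) = (\<lambda>y. a\<^sup>2 + 2 * a * b * y + b\<^sup>2 * y\<^sup>2)"
    by (auto simp: power2_eq_square algebra_simps)
  then show ?thesis
    using assms by (simp add: integrable_measure_pmf_finite)
qed

lemma integral_fourth_power_add_mult_le:
  fixes X :: "real pmf"
  assumes "finite (set_pmf X)" "(\<integral>y. y \<partial>X) = 0" "(\<integral>y. y\<^sup>2 \<partial>X) = 1"
  shows "(\<integral>y. (a + y * b)^4 \<partial>X) \<le> a^4 + 7 * (a\<^sup>2 * b\<^sup>2) + 5 * (\<integral>y. y^4 \<partial>X) * b^4"
proof -
  \<comment> \<open>The sign-indefinite term \<open>4 a b\<^sup>3 y\<^sup>3\<close> is absorbed into the \<open>y\<^sup>2\<close> and \<open>y\<^sup>4\<close> terms by AM-GM.\<close>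
  have pointwise: "(a + y * b)^4 \<le> a^4 + 4 * a^3 * b * y + 7 * a\<^sup>2 * b\<^sup>2 * y\<^sup>2 + 5 * b^4 * y^4" for y
  proof -
    have "a^4 + 4 * a^3 * b * y + 7 * a\<^sup>2 * b\<^sup>2 * y\<^sup>2 + 5 * b^4 * y^4 - (a + y * b)^4
        = (a * b * y - 2 * b\<^sup>2 * y\<^sup>2)\<^sup>2"
      by (simp add: eval_nat_numeral algebra_simps)
    then show ?thesis
      by (metis diff_ge_0_iff_ge zero_le_power2)
  qed
  have "(\<integral>y. (a + y * b)^4 \<partial>X)
      \<le> (\<integral>y. a^4 + 4 * a^3 * b * y + 7 * a\<^sup>2 * b\<^sup>2 * y\<^sup>2 + 5 * b^4 * y^4 \<partial>X)"
    using assms(1) pointwise by (rule integral_finite_pmf_mono)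
  also have "\<dots> = a^4 + 7 * (a\<^sup>2 * b\<^sup>2) + 5 * (\<integral>y. y^4 \<partial>X) * b^4"
    using assms by (simp add: integrable_measure_pmf_finite)
  finally show ?thesis .
qed

lemma bonami_step:
  fixes P :: "'a pmf" and X :: "real pmf" and g h :: "'a \<Rightarrow> real"
  assumes finP: "finite (set_pmf P)" and finX: "finite (set_pmf X)"
    and mean: "(\<integral>y. y \<partial>X) = 0" and var: "(\<integral>y. y\<^sup>2 \<partial>X) = 1"
    and C: "49/4 \<le> C" "5 * (\<integral>y. y^4 \<partial>X) \<le> C" and L: "0 \<le> L"
    and g: "(\<integral>x. (g x)^4 \<partial>P) \<le> L * C * (\<integral>x. (g x)\<^sup>2 \<partial>P)\<^sup>2"
    and h: "(\<integral>x. (h x)^4 \<partial>P) \<le> L * (\<integral>x. (h x)\<^sup>2 \<partial>P)\<^sup>2"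
  shows "(\<integral>x. (\<integral>y. (g x + y * h x)^4 \<partial>X) \<partial>P)
           \<le> L * C * (\<integral>x. (\<integral>y. (g x + y * h x)\<^sup>2 \<partial>X) \<partial>P)\<^sup>2"
proof -
  define G H where "G = (\<integral>x. (g x)\<^sup>2 \<partial>P)" and "H = (\<integral>x. (h x)\<^sup>2 \<partial>P)"
  have int: "integrable P f" for f :: "'a \<Rightarrow> real"
    using finP by (rule integrable_measure_pmf_finite)
  have nonneg: "0 \<le> G" "0 \<le> H" "0 \<le> (\<integral>x. (h x)^4 \<partial>P)"
    unfolding G_def H_def by (simp_all add: integral_nonneg)
  have sqrt_C: "7 * sqrt C \<le> 2 * C"
  proof -
    have "7/2 \<le> sqrt C"
      using C(1) by (intro real_le_rsqrt) (simp add: power2_eq_square)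
    then have "7 * sqrt C \<le> 2 * sqrt C * sqrt C"
      by (intro mult_right_mono) (use C(1) in simp_all)
    moreover have "2 * sqrt C * sqrt C = 2 * C"
      using C(1) by (simp add: mult.assoc)
    ultimately show ?thesis
      by linarith
  qed
  have cross: "(\<integral>x. (g x)\<^sup>2 * (h x)\<^sup>2 \<partial>P) \<le> L * sqrt C * G * H"
  proof (rule power2_le_imp_le)
    have "(\<integral>x. (g x)\<^sup>2 * (h x)\<^sup>2 \<partial>P)\<^sup>2 \<le> (\<integral>x. (g x)^4 \<partial>P) * (\<integral>x. (h x)^4 \<partial>P)"
      using integral_finite_pmf_Cauchy_Schwarz[OF finP, of "\<lambda>x. (g x)\<^sup>2" "\<lambda>x. (h x)\<^sup>2"]
      by (simp flip: power_mult)
    also have "\<dots> \<le> (L * C * G\<^sup>2) * (L * H\<^sup>2)"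
      using g h nonneg L C unfolding G_def H_def by (intro mult_mono) simp_all
    also have "\<dots> = (L * sqrt C * G * H)\<^sup>2"
      using C(1) by (simp add: power_mult_distrib power2_eq_square)
    finally show "(\<integral>x. (g x)\<^sup>2 * (h x)\<^sup>2 \<partial>P)\<^sup>2 \<le> (L * sqrt C * G * H)\<^sup>2" .
    show "0 \<le> L * sqrt C * G * H"
      using L C(1) nonneg by simp
  qed
  have "(\<integral>x. (\<integral>y. (g x + y * h x)^4 \<partial>X) \<partial>P)
      \<le> (\<integral>x. (g x)^4 + 7 * ((g x)\<^sup>2 * (h x)\<^sup>2) + 5 * (\<integral>y. y^4 \<partial>X) * (h x)^4 \<partial>P)"
    using finP integral_fourth_power_add_mult_le[OF finX mean var] by (rule integral_finite_pmf_mono)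
  also have "\<dots> = (\<integral>x. (g x)^4 \<partial>P) + 7 * (\<integral>x. (g x)\<^sup>2 * (h x)\<^sup>2 \<partial>P)
      + 5 * (\<integral>y. y^4 \<partial>X) * (\<integral>x. (h x)^4 \<partial>P)"
    by (simp add: int)
  also have "\<dots> \<le> L * C * G\<^sup>2 + 7 * (L * sqrt C * G * H) + C * (L * H\<^sup>2)"
    using g h cross C nonneg L unfolding G_def H_def
    by (intro add_mono mult_mono) simp_all
  also have "\<dots> \<le> L * C * (G + H)\<^sup>2"
    using mult_right_mono[OF sqrt_C, of "L * G * H"] L nonneg
    by (simp add: power2_eq_square algebra_simps)
  also have "G + H = (\<integral>x. (\<integral>y. (g x + y * h x)\<^sup>2 \<partial>X) \<partial>P)"
    unfolding G_def H_def by (simp add: integral_square_add_mult[OF finX mean var] int)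
  finally show ?thesis .
qed

lemma bonami_multilinear_poly:
  fixes X :: "real pmf"
  assumes fin: "finite (set_pmf X)"
    and mean: "(\<integral>y. y \<partial>X) = 0" and var: "(\<integral>y. y\<^sup>2 \<partial>X) = 1"
    and C: "49/4 \<le> C" "5 * (\<integral>y. y^4 \<partial>X) \<le> C"
  shows "(\<integral>x. (multilinear_poly n d c x)^4 \<partial>prod_dist X n)
           \<le> C^d * (\<integral>x. (multilinear_poly n d c x)\<^sup>2 \<partial>prod_dist X n)\<^sup>2"
proof -
  have constant_case: "(c {})^4 \<le> C^k * ((c {})\<^sup>2)\<^sup>2" for c :: "nat set \<Rightarrow> real" and k
  proof -
    have "1 * (c {})^4 \<le> C^k * (c {})^4"
      using C(1) by (intro mult_right_mono one_le_power) simp_all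
    then show ?thesis
      by (simp flip: power_mult)
  qed
  show ?thesis
  proof (induction n arbitrary: d c)
    case 0
    then show ?case
      using constant_case by (simp add: multilinear_poly_constant)
  next
    case (Suc n)
    show ?case
    proof (cases d)
      case 0
      then show ?thesis
        using constant_case by (simp add: multilinear_poly_constant)
    next
      case (Suc e)
      let ?g = "multilinear_poly n (Suc e) c" and ?h = "multilinear_poly n e (\<lambda>T. c (insert n T))"
      have split: "multilinear_poly (Suc n) (Suc e) c (x(n := y)) = ?g x + y * ?h x" for x y
        using multilinear_poly_Suc[of n e c "x(n := y)"] by (simp add: multilinear_poly_fun_upd_beyond)
      have "(\<integral>x. (\<integral>y. (?g x + y * ?h x)^4 \<partial>X) \<partial>prod_dist X n)
          \<le> C^e * C * (\<integral>x. (\<integral>y. (?g x + y * ?h x)\<^sup>2 \<partial>X) \<partial>prod_dist X n)\<^sup>2"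
        using Suc.IH[of "Suc e" c] Suc.IH[of e "\<lambda>T. c (insert n T)"] C(1)
        by (intro bonami_step[OF finite_set_prod_dist[OF fin] fin mean var C])
          (simp_all add: ac_simps)
      then show ?thesis
        using Suc by (simp add: integral_prod_dist_Suc[OF fin] split ac_simps)
    qed
  qed
qed

lemma min_atom_le_pmf:
  assumes "finite (set_pmf X)" "x \<in> set_pmf X"
  shows "min_atom X \<le> pmf X x"
  unfolding min_atom_def using assms by (intro Min_le) auto

lemma min_atom_pos:
  assumes "finite (set_pmf X)"
  shows "0 < min_atom X"
proof -
  have "min_atom X \<in> pmf X ` set_pmf X"
    unfolding min_atom_def using assms set_pmf_not_empty by (intro Min_in) auto
  then show ?thesis
    by (auto simp: set_pmf_iff order_le_neq_trans)
qed

lemma min_atom_le_1: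
  assumes "finite (set_pmf X)"
  shows "min_atom X \<le> 1"
  using min_atom_le_pmf[OF assms] set_pmf_not_empty pmf_le_1 by (metis all_not_in_conv order_trans)

lemma fourth_moment_le_inverse_min_atom:
  fixes X :: "real pmf"
  assumes fin: "finite (set_pmf X)" and var: "(\<integral>y. y\<^sup>2 \<partial>X) = 1"
  shows "(\<integral>y. y^4 \<partial>X) \<le> 1 / min_atom X"
proof -
  have atom: "y\<^sup>2 \<le> 1 / min_atom X" if y: "y \<in> set_pmf X" for y
  proof -
    have "min_atom X * y\<^sup>2 \<le> y\<^sup>2 * pmf X y"
      using min_atom_le_pmf[OF fin y] by (simp add: mult.commute mult_right_mono)
    also have "\<dots> \<le> (\<Sum>z\<in>set_pmf X. z\<^sup>2 * pmf X z)"
      using fin y by (intro member_le_sum) auto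
    also have "\<dots> = 1"
      using var fin by (simp add: integral_finite_pmf)
    finally show ?thesis
      using min_atom_pos[OF fin] by (simp add: field_simps)
  qed
  have "(\<integral>y. y^4 \<partial>X) \<le> (\<integral>y. 1 / min_atom X * y\<^sup>2 \<partial>X)"
  proof (rule integral_finite_pmf_mono[OF fin])
    fix y assume "y \<in> set_pmf X"
    then have "y\<^sup>2 * y\<^sup>2 \<le> 1 / min_atom X * y\<^sup>2"
      using atom by (intro mult_right_mono) simp_all
    then show "y^4 \<le> 1 / min_atom X * y\<^sup>2"
      by (simp add: eval_nat_numeral)
  qed
  also have "\<dots> = 1 / min_atom X"
    using var by simp
  finally show ?thesis .
qed

lemma integral_square_above_threshold_le:
  fixes f :: "'a \<Rightarrow> real"
  assumes fin: "finite (set_pmf M)" and t: "0 < t"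
  shows "(\<integral>x. (f x)\<^sup>2 * (if \<bar>f x\<bar> > t then 1 else 0) \<partial>M) \<le> (\<integral>x. (f x)^4 \<partial>M) / t\<^sup>2"
proof -
  have "(f x)\<^sup>2 * (if \<bar>f x\<bar> > t then 1 else 0) \<le> (f x)^4 / t\<^sup>2" for x
  proof (cases "\<bar>f x\<bar> > t")
    case True
    then have "t\<^sup>2 \<le> (f x)\<^sup>2"
      using t by (metis abs_ge_zero less_imp_le power2_abs power_mono)
    then have "t\<^sup>2 * (f x)\<^sup>2 \<le> (f x)\<^sup>2 * (f x)\<^sup>2"
      by (intro mult_right_mono) simp_all
    then show ?thesis
      using True t by (simp add: field_simps eval_nat_numeral)
  qed simp
  then have "(\<integral>x. (f x)\<^sup>2 * (if \<bar>f x\<bar> > t then 1 else 0) \<partial>M) \<le> (\<integral>x. (f x)^4 / t\<^sup>2 \<partial>M)"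
    by (intro integral_finite_pmf_mono[OF fin])
  then show ?thesis
    by simp
qed

lemma bonami_constant_over_threshold_le:
  fixes p :: real
  assumes "0 < p" "p \<le> 1"
  shows "max (49/4) (5 / p) / (2 * exp 1 / p)\<^sup>2 \<le> 49/100"
proof -
  have "max (49/4) (5 / p) * p\<^sup>2 \<le> 49/4"
    using assms by (auto simp: max_def power2_eq_square field_simps mult_le_one)
  moreover have "(25/4::real) \<le> (exp 1)\<^sup>2"
    using power_mono[OF exp_lower_Taylor_quadratic[of 1], of 2] by (simp add: power2_eq_square)
  ultimately show ?thesis
    using assms by (simp add: field_simps power2_eq_square)
qed

theorem corollary4p7:
  fixes X :: "real pmf" and n d :: nat and f :: "(nat \<Rightarrow> real) \<Rightarrow> real"
  assumes "finite (set_pmf X)"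
    and "measure_pmf.expectation X (\<lambda>x. x) = 0"
    and "measure_pmf.variance X (\<lambda>x. x) = 1"
    and "d \<ge> 1"
    and "is_multilinear_deg_le n d f"
    and "L2_norm X n f = 1"
  shows "measure_pmf.expectation (prod_dist X n)
           (\<lambda>x. (f x)^2 * (if \<bar>f x\<bar> > (2 * exp 1 / min_atom X) ^ d then 1 else 0)) \<le> (0.52::real)"
proof -
  note fin = assms(1) and mean = assms(2)
  define C where "C = max (49/4) (5 / min_atom X)"
  define q where "q = C / (2 * exp 1 / min_atom X)\<^sup>2"
  obtain c where f: "f = multilinear_poly n d c"
    using assms(5) unfolding is_multilinear_deg_le_def by blast
  have var: "(\<integral>y. y\<^sup>2 \<partial>X) = 1"
    using assms(2,3) by simp
  have second: "(\<integral>x. (f x)\<^sup>2 \<partial>prod_dist X n) = 1"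
    using assms(6) unfolding L2_norm_def by simp
  have "5 * (\<integral>y. y^4 \<partial>X) \<le> C"
    using fourth_moment_le_inverse_min_atom[OF fin var] unfolding C_def by simp
  then have fourth: "(\<integral>x. (f x)^4 \<partial>prod_dist X n) \<le> C^d"
    using bonami_multilinear_poly[OF fin mean var, of C n d c] second unfolding f C_def by simp
  have q: "0 \<le> q" "q \<le> 49/100"
    unfolding q_def C_def
    using bonami_constant_over_threshold_le min_atom_pos[OF fin] min_atom_le_1[OF fin] by simp_all
  have "measure_pmf.expectation (prod_dist X n)
           (\<lambda>x. (f x)^2 * (if \<bar>f x\<bar> > (2 * exp 1 / min_atom X) ^ d then 1 else 0))
      \<le> (\<integral>x. (f x)^4 \<partial>prod_dist X n) / ((2 * exp 1 / min_atom X) ^ d)\<^sup>2"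
    using min_atom_pos[OF fin] by (intro integral_square_above_threshold_le finite_set_prod_dist fin) simp
  also have "\<dots> \<le> C^d / ((2 * exp 1 / min_atom X) ^ d)\<^sup>2"
    using fourth by (simp add: divide_right_mono)
  also have "\<dots> = q^d"
    unfolding q_def power_divide power_mult[symmetric] by (simp add: mult.commute)
  also have "\<dots> \<le> q"
    using power_decreasing[of 1 d q] q assms(4) by simp
  finally show ?thesis
    using q by simp
qed

end
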